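(* For each $m \ge 2$ let $(r_m,p_m,s_m)$ be the probabilities of playing $R,P,S$ in a symmetric Nash equilibrium of the imbalanced $(m,3)$-RPS. Then as $m\to\infty$, $\max(r_m,p_m,s_m) \to 1$ (and the other two probabilities tend to $0$); that is, the symmetric Nash equilibrium probability vectors converge, up to permutation of coordinates, to a point mass, which majorizes every probability vector on three objects.
   Context: An $(m,n)$-RPS game is a symmetric, zero-sum, win/lose game with $m$ players and $n$ pure strategies ("objects"), played without collusion. The rules assign to every multiset $c$ of $m$ chosen objects a single winning object $\phi(c)\in c$; every player who chose $\phi(c)$ wins and every other player loses. If there are $m'$ winners, each winner receives payoff $\frac{m-m'}{m'}$ and each loser receives payoff $-1$. A symmetric Nash equilibrium is a mixed-strategy Nash equilibrium in which all players use the same probability distribution over objects. The imbalanced $(m,3)$-RPS has objects $R,P,S$ with the following rules: any multiset containing at least one $S$ and at least one $R$ is won by $R$; any multiset containing only $R$'s and $P$'s (with at least one of each) is won by $P$; any multiset containing only $P$'s and $S$'s (with at least one of each) is won by $S$; a multiset consisting of a single object type is won by that object. *)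

theory Defs
  imports "HOL-Library.Multiset" "HOL-Library.FuncSet" Complex_Main
begin

datatype obj = Rock | Paper | Scissors

definition objs :: "obj set" where
  "objs = {Rock, Paper, Scissors}"

definition winner :: "obj multiset \<Rightarrow> obj" where
  "winner c =
     (if Scissors \<in># c \<and> Rock \<in># c then Rock
      else if Rock \<in># c \<and> Paper \<in># c then Paper
      else if Paper \<in># c \<and> Scissors \<in># c then Scissors
      else if Rock \<in># c then Rock
      else if Paper \<in># c then Paper
      else Scissors)"

definition payoff :: "nat \<Rightarrow> obj multiset \<Rightarrow> obj \<Rightarrow> real" where
  "payoff m c a =
     (if winner c = a then (real m - real (count c a)) / real (count c a) else -1)"

definition is_mixed :: "(obj \<Rightarrow> real) \<Rightarrow> bool" where
  "is_mixed x \<longleftrightarrow> (\<forall>b\<in>objs. 0 \<le> x b) \<and> (\<Sum>b\<in>objs. x b) = 1"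

definition exp_payoff :: "nat \<Rightarrow> (obj \<Rightarrow> real) \<Rightarrow> obj \<Rightarrow> real" where
  "exp_payoff m x a =
     (\<Sum>f\<in>PiE {..<m-1} (\<lambda>_. objs).
        (\<Prod>i<m-1. x (f i)) * payoff m (add_mset a (image_mset f (mset_set {..<m-1}))) a)"

definition sym_NE :: "nat \<Rightarrow> (obj \<Rightarrow> real) \<Rightarrow> bool" where
  "sym_NE m x \<longleftrightarrow> is_mixed x \<and>
     (\<forall>y. is_mixed y \<longrightarrow>
        (\<Sum>a\<in>objs. y a * exp_payoff m x a) \<le> (\<Sum>a\<in>objs. x a * exp_payoff m x a))"

end

theory Submission
  imports Defs
begin

text \<open>
  Write \<open>r, p, s\<close> for the equilibrium probabilities and \<open>m\<close> for the number of players.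
  A player choosing \<open>a\<close> wins exactly when the other \<open>m - 1\<close> choices lie in a certain set
  \<open>A\<close> (for Rock, a signed combination of such events), and then gets \<open>m / (1 + K) - 1\<close>, where \<open>K\<close> is the binomially distributed number of
  others choosing \<open>a\<close>. Since \<open>q m E[1 / (1 + K)] = (q + u)^m - u^m\<close> for \<open>K ~ Bin(m - 1, q)\<close>,
  the weighted payoffs \<open>x\<^sub>a E\<^sub>a\<close> are polynomials, e.g. \<open>p E\<^sub>P = (r + p)^m - r^m - p\<close>.
  The game is zero-sum, so the equilibrium value is \<open>0\<close>; as no pure strategy beats it,
  every \<open>x\<^sub>a E\<^sub>a\<close> vanishes, which gives \<open>(r + p)^m - r^m = p\<close> and \<open>(p + s)^m - p^m = s\<close>.
  If \<open>(m + 1) (1 - c)^m < c\<close>, these equations leave at most one coordinate \<open>\<ge> c\<close>: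
  e.g. \<open>r \<ge> c\<close> forces \<open>s \<le> (p + s)^m \<le> (1 - c)^m\<close>, and if also \<open>p \<ge> c\<close>, Bernoulli's
  inequality gives \<open>r \<le> m s + r^m \<le> (m + 1) (1 - c)^m\<close>.
\<close>

definition sample_expectation ::
    "'a set \<Rightarrow> ('a \<Rightarrow> real) \<Rightarrow> nat \<Rightarrow> ('a multiset \<Rightarrow> real) \<Rightarrow> real" where
  "sample_expectation S x n g =
     (\<Sum>f\<in>PiE {..<n} (\<lambda>_. S). (\<Prod>i<n. x (f i)) * g (image_mset f (mset_set {..<n})))"

lemma sample_expectation_0 [simp]: "sample_expectation S x 0 g = g {#}"
  by (simp add: sample_expectation_def)

lemma sample_expectation_Suc:
  "sample_expectation S x (Suc n) g = (\<Sum>b\<in>S. x b * sample_expectation S x n (\<lambda>M. g (add_mset b M)))"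
proof -
  let ?F = "\<lambda>f. (\<Prod>i<Suc n. x (f i)) * g (image_mset f (mset_set {..<Suc n}))"
  have "sample_expectation S x (Suc n) g = sum ?F ((\<lambda>(b, f). f(n := b)) ` (S \<times> PiE {..<n} (\<lambda>_. S)))"
    unfolding sample_expectation_def lessThan_Suc by (simp only: PiE_insert_eq)
  also have "\<dots> = sum (?F \<circ> (\<lambda>(b, f). f(n := b))) (S \<times> PiE {..<n} (\<lambda>_. S))"
    by (rule sum.reindex) (rule inj_combinator, simp)
  also have "\<dots> = (\<Sum>b\<in>S. \<Sum>f\<in>PiE {..<n} (\<lambda>_. S). ?F (f(n := b)))"
    by (simp only: sum.cartesian_product comp_def case_prod_unfold fst_conv snd_conv)
  also have "\<dots> = (\<Sum>b\<in>S. \<Sum>f\<in>PiE {..<n} (\<lambda>_. S).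
      x b * ((\<Prod>i<n. x (f i)) * g (add_mset b (image_mset f (mset_set {..<n})))))"
  proof (intro sum.cong refl)
    fix b f
    have "(\<Prod>i<n. x ((f(n := b)) i)) = (\<Prod>i<n. x (f i))"
      by (intro prod.cong) auto
    moreover have "image_mset (f(n := b)) (mset_set {..<n}) = image_mset f (mset_set {..<n})"
      by (intro image_mset_cong) auto
    ultimately show "?F (f(n := b)) =
        x b * ((\<Prod>i<n. x (f i)) * g (add_mset b (image_mset f (mset_set {..<n}))))"
      by (simp add: lessThan_Suc)
  qed
  also have "\<dots> = (\<Sum>b\<in>S. x b * sample_expectation S x n (\<lambda>M. g (add_mset b M)))"
    by (simp add: sample_expectation_def sum_distrib_left)
  finally show ?thesis .
qed

lemma sample_expectation_const: "sample_expectation S x n (\<lambda>_. c) = sum x S ^ n * c"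
  by (induction n) (simp_all add: sample_expectation_Suc sum_distrib_right mult.assoc)

lemma sample_expectation_add:
  "sample_expectation S x n (\<lambda>M. g M + h M) = sample_expectation S x n g + sample_expectation S x n h"
  by (simp add: sample_expectation_def sum.distrib algebra_simps)

lemma sample_expectation_diff:
  "sample_expectation S x n (\<lambda>M. g M - h M) = sample_expectation S x n g - sample_expectation S x n h"
  by (simp add: sample_expectation_def sum_subtractf algebra_simps)

lemma sample_expectation_cmult:
  "sample_expectation S x n (\<lambda>M. c * g M) = c * sample_expectation S x n g"
  by (simp add: sample_expectation_def sum_distrib_left algebra_simps)

lemma binomial_sum_Suc:
  fixes q u :: "'a::comm_semiring_1"
  shows "(\<Sum>k\<le>Suc n. of_nat (Suc n choose k) * q ^ k * u ^ (Suc n - k) * \<phi> k) =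
    q * (\<Sum>k\<le>n. of_nat (n choose k) * q ^ k * u ^ (n - k) * \<phi> (Suc k)) +
    u * (\<Sum>k\<le>n. of_nat (n choose k) * q ^ k * u ^ (n - k) * \<phi> k)"
proof -
  have "(\<Sum>k\<le>Suc n. of_nat (Suc n choose k) * q ^ k * u ^ (Suc n - k) * \<phi> k) =
      u ^ Suc n * \<phi> 0 + (\<Sum>k\<le>n. of_nat (n choose k) * q ^ Suc k * u ^ (n - k) * \<phi> (Suc k)) +
      (\<Sum>k\<le>n. of_nat (n choose Suc k) * q ^ Suc k * u ^ (n - k) * \<phi> (Suc k))"
    by (simp only: sum.atMost_Suc_shift) (simp add: sum.distrib algebra_simps)
  moreover have "q * (\<Sum>k\<le>n. of_nat (n choose k) * q ^ k * u ^ (n - k) * \<phi> (Suc k)) =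
      (\<Sum>k\<le>n. of_nat (n choose k) * q ^ Suc k * u ^ (n - k) * \<phi> (Suc k))"
    by (simp add: sum_distrib_left algebra_simps)
  moreover have "u * (\<Sum>k\<le>n. of_nat (n choose k) * q ^ k * u ^ (n - k) * \<phi> k) =
      (\<Sum>k\<le>Suc n. of_nat (n choose k) * q ^ k * u ^ (Suc n - k) * \<phi> k)"
    by (simp add: sum_distrib_left algebra_simps Suc_diff_le binomial_eq_0)
  moreover have "\<dots> = u ^ Suc n * \<phi> 0 +
      (\<Sum>k\<le>n. of_nat (n choose Suc k) * q ^ Suc k * u ^ (n - k) * \<phi> (Suc k))"
    by (simp only: sum.atMost_Suc_shift) simp
  ultimately show ?thesis by (simp add: algebra_simps)
qed

lemma binomial_sum_divide_Suc:
  fixes q u :: "'a::field_char_0"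
  shows "q * (of_nat (Suc n) * (\<Sum>k\<le>n. of_nat (n choose k) * q ^ k * u ^ (n - k) / (1 + of_nat k))) =
    (q + u) ^ Suc n - u ^ Suc n"
proof -
  have "q * (of_nat (Suc n) * (of_nat (n choose k) * q ^ k * u ^ (n - k) / (1 + of_nat k))) =
      of_nat (Suc n choose Suc k) * q ^ Suc k * u ^ (Suc n - Suc k)" for k
  proof -
    have pascal: "of_nat (Suc n) * of_nat (n choose k) = (of_nat (Suc n choose Suc k) * (1 + of_nat k) :: 'a)"
      using Suc_times_binomial_eq[of n k] by (metis of_nat_Suc of_nat_mult)
    have "(1 + of_nat k :: 'a) \<noteq> 0"
      by (metis of_nat_Suc of_nat_eq_0_iff nat.distinct(1))
    then have "q * (of_nat (Suc n) * (of_nat (n choose k) * q ^ k * u ^ (n - k) / (1 + of_nat k))) =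
        (of_nat (Suc n) * of_nat (n choose k)) * (q ^ Suc k * u ^ (n - k)) / (1 + of_nat k)"
      by (simp add: mult_ac)
    also have "\<dots> = of_nat (Suc n choose Suc k) * (q ^ Suc k * u ^ (n - k))"
      unfolding pascal using \<open>(1 + of_nat k :: 'a) \<noteq> 0\<close> by simp
    finally show ?thesis by (simp add: mult_ac)
  qed
  then have "q * (of_nat (Suc n) * (\<Sum>k\<le>n. of_nat (n choose k) * q ^ k * u ^ (n - k) / (1 + of_nat k))) =
      (\<Sum>k\<le>n. of_nat (Suc n choose Suc k) * q ^ Suc k * u ^ (Suc n - Suc k))"
    by (simp add: sum_distrib_left)
  also have "\<dots> = (q + u) ^ Suc n - u ^ Suc n"
    unfolding binomial_ring[of q u "Suc n"] sum.atMost_Suc_shift by simp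
  finally show ?thesis .
qed

definition pot_share :: "'a set \<Rightarrow> 'a \<Rightarrow> 'a multiset \<Rightarrow> real" where
  "pot_share A a M = (if set_mset M \<subseteq> A then 1 / (1 + real (count M a)) else 0)"

lemma sample_expectation_binomial:
  assumes "finite S" "A \<subseteq> S" "a \<in> A"
  shows "sample_expectation S x n (\<lambda>M. if set_mset M \<subseteq> A then \<phi> (count M a) else 0) =
    (\<Sum>k\<le>n. real (n choose k) * x a ^ k * sum x (A - {a}) ^ (n - k) * \<phi> k)"
proof (induction n arbitrary: \<phi>)
  case 0
  then show ?case by simp
next
  case (Suc n)
  let ?E = "\<lambda>\<psi>. sample_expectation S x n (\<lambda>M. if set_mset M \<subseteq> A then \<psi> (count M a) else 0)"
  have "x b * sample_expectation S x n
        (\<lambda>M. if set_mset (add_mset b M) \<subseteq> A then \<phi> (count (add_mset b M) a) else 0) =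
      (if b = a then x a * ?E (\<lambda>k. \<phi> (Suc k)) else if b \<in> A then x b * ?E \<phi> else 0)" for b
  proof -
    consider "b = a" | "b \<in> A" "b \<noteq> a" | "b \<notin> A" by blast
    then show ?thesis
    proof cases
      case 1
      then show ?thesis using assms(3) by (simp cong: if_cong)
    next
      case 2
      then show ?thesis by (simp cong: if_cong)
    next
      case 3
      then show ?thesis using assms(3) sample_expectation_const[of S x n 0] by auto
    qed
  qed
  then have "sample_expectation S x (Suc n) (\<lambda>M. if set_mset M \<subseteq> A then \<phi> (count M a) else 0) =
      (\<Sum>b\<in>S. if b = a then x a * ?E (\<lambda>k. \<phi> (Suc k)) else if b \<in> A then x b * ?E \<phi> else 0)"
    by (simp only: sample_expectation_Suc)
  also have "\<dots> = (\<Sum>b\<in>A. if b = a then x a * ?E (\<lambda>k. \<phi> (Suc k)) else x b * ?E \<phi>)"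
    using assms by (intro sum.mono_neutral_cong_right) auto
  also have "\<dots> = x a * ?E (\<lambda>k. \<phi> (Suc k)) + sum x (A - {a}) * ?E \<phi>"
    using assms finite_subset[OF assms(2,1)] by (simp add: sum.remove[of A a] sum_distrib_right)
  also have "\<dots> = (\<Sum>k\<le>Suc n. real (Suc n choose k) * x a ^ k * sum x (A - {a}) ^ (Suc n - k) * \<phi> k)"
    by (simp only: Suc.IH[of "\<lambda>k. \<phi> (Suc k)"] Suc.IH[of \<phi>] binomial_sum_Suc)
  finally show ?case .
qed

lemma sample_expectation_pot_share:
  assumes "finite S" "A \<subseteq> S" "a \<in> A"
  shows "x a * (real (Suc n) * sample_expectation S x n (pot_share A a)) =
    sum x A ^ Suc n - sum x (A - {a}) ^ Suc n"
proof -
  have "sample_expectation S x n (pot_share A a) =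
      (\<Sum>k\<le>n. real (n choose k) * x a ^ k * sum x (A - {a}) ^ (n - k) / (1 + real k))"
    using sample_expectation_binomial[OF assms, of x n "\<lambda>k. 1 / (1 + real k)"]
    by (simp add: pot_share_def[abs_def])
  moreover have "sum x A = x a + sum x (A - {a})"
    using assms finite_subset[OF assms(2,1)] by (simp add: sum.remove)
  ultimately show ?thesis by (simp only: binomial_sum_divide_Suc)
qed

lemma objs_UNIV: "objs = UNIV"
  unfolding objs_def using obj.exhaust by blast

lemma finite_objs: "finite objs"
  by (simp add: objs_def)

lemma sum_objs: "(\<Sum>b\<in>objs. f b) = f Rock + f Paper + f Scissors"
  by (simp add: objs_def add.assoc)

lemma is_mixedD:
  assumes "is_mixed x"
  shows "0 \<le> x Rock" "0 \<le> x Paper" "0 \<le> x Scissors" "x Rock + x Paper + x Scissors = 1"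
  using assms by (auto simp: is_mixed_def objs_def)

lemma exp_payoff_Suc:
  "exp_payoff (Suc n) x a = sample_expectation objs x n (\<lambda>M. payoff (Suc n) (add_mset a M) a)"
  by (simp add: exp_payoff_def sample_expectation_def)

lemma payoff_add_mset:
  "payoff m (add_mset a M) a =
    (if winner (add_mset a M) = a then real m / (1 + real (count M a)) - 1 else -1)"
  by (simp add: payoff_def field_simps)

text \<open>Rock wins unless the others avoid Scissors but not Paper; the three terms are
  inclusion-exclusion over the events \<open>set_mset M \<subseteq> A\<close>.\<close>

lemma payoff_Rock:
  "payoff (Suc n) (add_mset Rock M) Rock =
    (real (Suc n) * pot_share objs Rock M - 1) - (real (Suc n) * pot_share {Rock, Paper} Rock M - 1)
      + (real (Suc n) * pot_share {Rock} Rock M - 1)"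
proof -
  have "set_mset M \<subseteq> {Rock, Paper} \<longleftrightarrow> Scissors \<notin># M"
    by (auto, metis obj.exhaust)
  moreover have "set_mset M \<subseteq> {Rock} \<longleftrightarrow> Scissors \<notin># M \<and> Paper \<notin># M"
    by (auto, metis obj.exhaust)
  ultimately show ?thesis
    by (auto simp: payoff_add_mset winner_def pot_share_def objs_UNIV)
qed

lemma payoff_Paper:
  "payoff (Suc n) (add_mset Paper M) Paper = real (Suc n) * pot_share {Rock, Paper} Paper M - 1"
proof -
  have "set_mset M \<subseteq> {Rock, Paper} \<longleftrightarrow> Scissors \<notin># M"
    by (auto, metis obj.exhaust)
  then show ?thesis
    by (auto simp: payoff_add_mset winner_def pot_share_def)
qed

lemma payoff_Scissors:
  "payoff (Suc n) (add_mset Scissors M) Scissors = real (Suc n) * pot_share {Paper, Scissors} Scissors M - 1"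
proof -
  have "set_mset M \<subseteq> {Paper, Scissors} \<longleftrightarrow> Rock \<notin># M"
    by (auto, metis obj.exhaust)
  then show ?thesis
    by (auto simp: payoff_add_mset winner_def pot_share_def)
qed

lemma weighted_pot_share_payoff:
  assumes "is_mixed x" "a \<in> A"
  shows "x a * sample_expectation objs x n (\<lambda>M. real (Suc n) * pot_share A a M - 1) =
    sum x A ^ Suc n - sum x (A - {a}) ^ Suc n - x a"
proof -
  have "sum x objs = 1"
    using assms(1) by (simp add: is_mixed_def)
  then have "sample_expectation objs x n (\<lambda>M. real (Suc n) * pot_share A a M - 1) =
      real (Suc n) * sample_expectation objs x n (pot_share A a) - 1"
    by (simp add: sample_expectation_diff sample_expectation_cmult sample_expectation_const)
  moreover have "A \<subseteq> objs"
    by (simp add: objs_UNIV)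
  ultimately show ?thesis
    using sample_expectation_pot_share[OF finite_objs _ assms(2), of x n]
    by (simp add: right_diff_distrib)
qed

lemma weighted_exp_payoff_Rock:
  assumes "is_mixed x"
  shows "x Rock * exp_payoff (Suc n) x Rock =
    1 - (x Paper + x Scissors) ^ Suc n - (x Rock + x Paper) ^ Suc n + x Paper ^ Suc n + x Rock ^ Suc n - x Rock"
proof -
  have "objs - {Rock} = {Paper, Scissors}" "{Rock, Paper} - {Rock} = {Paper}"
    by (auto simp: objs_def)
  moreover have "sum x objs = 1"
    using assms by (simp add: is_mixed_def)
  ultimately show ?thesis
    using weighted_pot_share_payoff[OF assms, of Rock objs n]
      weighted_pot_share_payoff[OF assms, of Rock "{Rock, Paper}" n]
      weighted_pot_share_payoff[OF assms, of Rock "{Rock}" n]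
    unfolding exp_payoff_Suc payoff_Rock sample_expectation_add sample_expectation_diff
    by (simp add: objs_UNIV algebra_simps)
qed

lemma weighted_exp_payoff_Paper:
  assumes "is_mixed x"
  shows "x Paper * exp_payoff (Suc n) x Paper = (x Rock + x Paper) ^ Suc n - x Rock ^ Suc n - x Paper"
  using weighted_pot_share_payoff[OF assms, of Paper "{Rock, Paper}" n]
  by (simp add: exp_payoff_Suc payoff_Paper insert_Diff_if)

lemma weighted_exp_payoff_Scissors:
  assumes "is_mixed x"
  shows "x Scissors * exp_payoff (Suc n) x Scissors =
    (x Paper + x Scissors) ^ Suc n - x Paper ^ Suc n - x Scissors"
  using weighted_pot_share_payoff[OF assms, of Scissors "{Paper, Scissors}" n]
  by (simp add: exp_payoff_Suc payoff_Scissors insert_Diff_if)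

lemma exp_payoff_zero_sum:
  assumes "is_mixed x"
  shows "(\<Sum>a\<in>objs. x a * exp_payoff (Suc n) x a) = 0"
  using is_mixedD(4)[OF assms]
  by (simp add: sum_objs weighted_exp_payoff_Rock[OF assms] weighted_exp_payoff_Paper[OF assms]
      weighted_exp_payoff_Scissors[OF assms] algebra_simps)

lemma sym_NE_exp_payoff_le:
  assumes "sym_NE m x"
  shows "exp_payoff m x a \<le> (\<Sum>b\<in>objs. x b * exp_payoff m x b)"
proof -
  have "is_mixed (\<lambda>b. if b = a then 1 else 0)"
    by (cases a) (auto simp: is_mixed_def sum_objs)
  then have "(\<Sum>b\<in>objs. (if b = a then 1 else 0) * exp_payoff m x b) \<le> (\<Sum>b\<in>objs. x b * exp_payoff m x b)"
    using assms by (simp add: sym_NE_def)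
  then show ?thesis
    by (cases a) (simp_all add: sum_objs)
qed

lemma sym_NE_weighted_exp_payoff_eq_0:
  assumes "sym_NE (Suc n) x"
  shows "x a * exp_payoff (Suc n) x a = 0"
proof -
  have mixed: "is_mixed x"
    using assms by (simp add: sym_NE_def)
  have nonpos: "x b * exp_payoff (Suc n) x b \<le> 0" for b
    using sym_NE_exp_payoff_le[OF assms, of b] exp_payoff_zero_sum[OF mixed] mixed
    by (simp add: is_mixed_def objs_UNIV mult_nonneg_nonpos)
  have "x Rock * exp_payoff (Suc n) x Rock + x Paper * exp_payoff (Suc n) x Paper
      + x Scissors * exp_payoff (Suc n) x Scissors = 0"
    using exp_payoff_zero_sum[OF mixed] by (simp add: sum_objs)
  then show ?thesis
    using nonpos[of Rock] nonpos[of Paper] nonpos[of Scissors] by (cases a) (hypsubst, linarith)+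
qed

lemma sym_NE_indifference:
  assumes "sym_NE (Suc n) x"
  shows "(x Rock + x Paper) ^ Suc n - x Rock ^ Suc n = x Paper"
    and "(x Paper + x Scissors) ^ Suc n - x Paper ^ Suc n = x Scissors"
proof -
  have mixed: "is_mixed x"
    using assms by (simp add: sym_NE_def)
  show "(x Rock + x Paper) ^ Suc n - x Rock ^ Suc n = x Paper"
    using sym_NE_weighted_exp_payoff_eq_0[OF assms, of Paper]
    unfolding weighted_exp_payoff_Paper[OF mixed] by linarith
  show "(x Paper + x Scissors) ^ Suc n - x Paper ^ Suc n = x Scissors"
    using sym_NE_weighted_exp_payoff_eq_0[OF assms, of Scissors]
    unfolding weighted_exp_payoff_Scissors[OF mixed] by linarith
qed

lemma indifference_max_gt:
  fixes r p s c :: real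
  assumes nonneg: "0 \<le> r" "0 \<le> p" "0 \<le> s" and sum: "r + p + s = 1"
    and indiff_P: "(r + p) ^ m - r ^ m = p" and indiff_S: "(p + s) ^ m - p ^ m = s"
    and "c \<le> 1" and small: "(real m + 1) * (1 - c) ^ m < c"
  shows "1 - 2 * c < max r (max p s)"
proof -
  have "0 \<le> 1 - c"
    using \<open>c \<le> 1\<close> by simp
  then have "(1 - c) ^ m \<le> (real m + 1) * (1 - c) ^ m"
    by (simp add: distrib_right)
  then have small': "(1 - c) ^ m < c"
    using small by linarith
  have s_le: "s \<le> (p + s) ^ m"
    using indiff_S zero_le_power[OF nonneg(2), of m] by linarith
  have p_le: "p \<le> (r + p) ^ m"
    using indiff_P zero_le_power[OF nonneg(1), of m] by linarith
  have r_le: "r \<le> real m * s + r ^ m"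
  proof -
    have "1 - real m * s \<le> (1 - s) ^ m"
      using Bernoulli_inequality[of "- s" m] nonneg sum by simp
    moreover have "r + p = 1 - s"
      using sum by simp
    with indiff_P have "(1 - s) ^ m - r ^ m = p"
      by simp
    ultimately show ?thesis
      using sum nonneg(3) by linarith
  qed
  have s_small: "s \<le> (1 - c) ^ m" if "c \<le> r"
    using s_le power_mono[of "p + s" "1 - c" m] that nonneg sum by linarith
  have p_small: "p \<le> (1 - c) ^ m" if "c \<le> s"
    using p_le power_mono[of "r + p" "1 - c" m] that nonneg sum by linarith
  have "r ^ m \<le> (1 - c) ^ m" if "c \<le> p"
    using power_mono[of r "1 - c" m] that nonneg sum by linarith
  with s_small have "real m * s + r ^ m \<le> (real m + 1) * (1 - c) ^ m" if "c \<le> r" "c \<le> p"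
    using that mult_left_mono[of s "(1 - c) ^ m" "real m"] by (simp add: distrib_right)
  then have "\<not> (c \<le> r \<and> c \<le> s)" "\<not> (c \<le> p \<and> c \<le> s)" "\<not> (c \<le> r \<and> c \<le> p)"
    using s_small p_small r_le small small' by force+
  then show ?thesis
    using sum by (simp add: less_max_iff_disj) linarith
qed

lemma Suc_times_power_tendsto_0:
  fixes q :: real
  assumes "\<bar>q\<bar> < 1"
  shows "(\<lambda>m. (real m + 1) * q ^ m) \<longlonglongrightarrow> 0"
proof -
  have "(\<lambda>m. real m * q ^ m + q ^ m) \<longlonglongrightarrow> 0 + 0"
    using assms by (intro tendsto_add powser_times_n_limit_0 LIMSEQ_power_zero) simp_all
  then show ?thesis
    by (simp add: distrib_right)
qed

lemma sym_NE_max_gt: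
  assumes "sym_NE (Suc n) x" "c \<le> 1" "(real (Suc n) + 1) * (1 - c) ^ Suc n < c"
  shows "1 - 2 * c < max (x Rock) (max (x Paper) (x Scissors))"
proof -
  have "is_mixed x"
    using assms(1) by (simp add: sym_NE_def)
  from indifference_max_gt[OF is_mixedD[OF this] sym_NE_indifference[OF assms(1)] assms(2,3)]
  show ?thesis .
qed

theorem mainTheorem3:
  fixes x :: "nat \<Rightarrow> obj \<Rightarrow> real"
  assumes "\<And>m. m \<ge> 2 \<Longrightarrow> sym_NE m (x m)"
  shows "(\<lambda>m. max (x m Rock) (max (x m Paper) (x m Scissors))) \<longlonglongrightarrow> 1"
  unfolding tendsto_iff dist_real_def
proof (intro allI impI)
  fix e :: real
  assume "0 < e"
  define c where "c = min (e / 2) 1"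
  have c: "0 < c" "c \<le> 1" "2 * c \<le> e"
    using \<open>0 < e\<close> by (auto simp: c_def)
  have "\<forall>\<^sub>F m in sequentially. (real m + 1) * (1 - c) ^ m < c"
    using c by (intro order_tendstoD(2)[OF Suc_times_power_tendsto_0]) auto
  then show "\<forall>\<^sub>F m in sequentially. \<bar>max (x m Rock) (max (x m Paper) (x m Scissors)) - 1\<bar> < e"
    using eventually_ge_at_top[of 2]
  proof eventually_elim
    case (elim m)
    have NE: "sym_NE m (x m)"
      using assms elim(2) by simp
    obtain n where "m = Suc n"
      using elim(2) by (cases m) auto
    then have "1 - 2 * c < max (x m Rock) (max (x m Paper) (x m Scissors))"
      using sym_NE_max_gt[of n "x m" c] NE elim(1) c(2) by simp
    moreover have "max (x m Rock) (max (x m Paper) (x m Scissors)) \<le> 1"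
      using NE is_mixedD[of "x m"] by (auto simp: sym_NE_def)
    ultimately show ?case
      using c by linarith
  qed
qed

end
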